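(* Suppose $\theta$ is the Exponential law with rate $1$. Then the unique stationary distribution $\pi_n$ of the gap process $\mathbf{Y}$ is $\mathrm{Exp}(1)^{\otimes(n-1)}$, i.e. the law on $\mathbb{R}_+^{n-1}$ with density $\exp(-\sum_{i=1}^{n-1}y_i)$.
   Context: Fix $n\ge 2$. The $n$-particle Stochastic Follow-the-Leader system $\mathbf{X}=(X_1,\dots,X_n)$ on $\mathbb{R}$, with $X_n(t)<\dots<X_1(t)$, evolves as a pure jump Markov process: the leader $X_1$ jumps forward at rate $1$ with i.i.d. jump sizes of law $\theta$; for $i\ge 2$, particle $X_i$ jumps at rate $X_{i-1}-X_i$ to a location chosen uniformly in $(X_i,X_{i-1})$. The gap process is $Y_i(t)=X_i(t)-X_{i+1}(t)$, $i=1,\dots,n-1$; it is a Markov process on $\mathbb{R}_+^{n-1}$ with generator $$\mathcal{L}_nf(\mathbf{y})=y_{n-1}\mathbb{E}_U[f(\mathbf{y}-y_{n-1}Ue_{n-1})-f(\mathbf{y})]+\sum_{i=1}^{n-2}y_i\mathbb{E}_U[f(\mathbf{y}+y_iU(e_{i+1}-e_i))-f(\mathbf{y})]+\mathbb{E}_\theta[f(\mathbf{y}+Ze_1)-f(\mathbf{y})],$$ $U\sim\mathrm{U}(0,1)$, $Z\sim\theta$. It is known that this process has a unique stationary distribution $\pi_n$. *)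

theory Defs
  imports "HOL-Probability.Probability"
begin

text \<open>Gaps are indexed 1..n-1; a state is a function y :: nat => real
  (coordinates outside 1..n-1 are irrelevant). The law U(0,1):\<close>

definition U01 :: "real measure" where
  "U01 = uniform_measure lborel {0..1}"

definition Exp1 :: "real measure" where
  "Exp1 = density lborel (exponential_density 1)"

definition gap_gen ::
  "nat \<Rightarrow> real measure \<Rightarrow> ((nat \<Rightarrow> real) \<Rightarrow> real) \<Rightarrow> (nat \<Rightarrow> real) \<Rightarrow> real" where
  "gap_gen n theta f y =
     y (n - 1) * (\<integral>u. f (y(n - 1 := y (n - 1) - y (n - 1) * u)) - f y \<partial>U01)
   + (\<Sum>i\<in>{1..n - 2}. y i * (\<integral>u. f (y(i := y i - y i * u, Suc i := y (Suc i) + y i * u)) - f y \<partial>U01))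
   + (\<integral>z. f (y(1 := y 1 + z)) - f y \<partial>theta)"

definition gap_space :: "nat \<Rightarrow> (nat \<Rightarrow> real) measure" where
  "gap_space n = PiM {1..n - 1} (\<lambda>_. borel)"

text \<open>Stationarity of a probability law mu on R_+^{n-1} for the gap process,
  in the infinitesimal (generator) sense: for every bounded measurable test
  function f, L_n f is mu-integrable and integrates to 0.\<close>

definition gap_stationary :: "nat \<Rightarrow> real measure \<Rightarrow> (nat \<Rightarrow> real) measure \<Rightarrow> bool" where
  "gap_stationary n theta mu \<longleftrightarrow>
     prob_space mu \<and> sets mu = sets (gap_space n) \<and>
     (AE y in mu. \<forall>i\<in>{1..n - 1}. 0 \<le> y i) \<and>
     (\<forall>f. f \<in> borel_measurable (gap_space n) \<and> (\<exists>B. \<forall>y. \<bar>f y\<bar> \<le> B) \<longrightarrow>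
        integrable mu (gap_gen n theta f) \<and> (\<integral>y. gap_gen n theta f y \<partial>mu) = 0)"

end

(*
  The generator only sees differences f(y') - f(y), so shifting the test function by a constant
  reduces to bounded g >= 0. Under the product of Exp(1) laws, writing E_k for the integral of
  y_k g, the jump terms of L_n g integrate to (int g) - E_(n-1) for the last gap (which loses a
  uniform fraction of itself), to E_(i+1) - E_i for gap i (which hands a uniform fraction of itself
  to gap i+1), and to E_1 - (int g) for the leader (whose Exp(1) jump is added to gap 1); these
  telescope to 0. All three balances come from one fact about exponentials: if T has density
  t e^(-t), the law of the sum of two independent Exp(1) variables, and U is uniform on (0,1), then
  T(1 - U) and TU are independent Exp(1) variables.
*)

theory Submission
  imports Defs
begin

lemma sets_Exp1 [measurable_cong, simp]: "sets Exp1 = sets borel"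
  by (simp add: Exp1_def)

lemma space_Exp1 [simp]: "space Exp1 = UNIV"
  by (simp add: Exp1_def)

lemma sets_U01 [measurable_cong, simp]: "sets U01 = sets borel"
  by (simp add: U01_def)

lemma space_U01 [simp]: "space U01 = UNIV"
  by (simp add: U01_def)

lemma prob_space_Exp1: "prob_space Exp1"
  unfolding Exp1_def by (rule prob_space_exponential_density) simp

lemma prob_space_U01: "prob_space U01"
  unfolding U01_def by (rule prob_space_uniform_measure) auto

lemma borel_measurable_nn_integral_U01 [measurable (raw)]:
  "case_prod f \<in> borel_measurable (N \<Otimes>\<^sub>M U01) \<Longrightarrow> (\<lambda>x. \<integral>\<^sup>+u. f x u \<partial>U01) \<in> borel_measurable N"
  by (rule sigma_finite_measure.borel_measurable_nn_integral[OF prob_space_imp_sigma_finite[OF prob_space_U01]])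

lemma pred_atLeastAtMost [measurable (raw)]:
  fixes f g h :: "'a \<Rightarrow> real"
  assumes [measurable]: "f \<in> borel_measurable M" "g \<in> borel_measurable M" "h \<in> borel_measurable M"
  shows "Measurable.pred M (\<lambda>x. f x \<in> {g x..h x})"
  unfolding atLeastAtMost_iff by measurable

definition exp1_density :: "real \<Rightarrow> ennreal" where
  "exp1_density t = ennreal (exp (- t)) * indicator {0..} t"

lemma borel_measurable_exp1_density [measurable]: "exp1_density \<in> borel_measurable borel"
  unfolding exp1_density_def by measurable

lemma exp1_density_add:
  "exp1_density (s + t) * indicator {0..s + t} s = exp1_density s * exp1_density t"
  by (auto simp: exp1_density_def indicator_def ennreal_mult[symmetric] mult_exp_exp)

lemma nn_integral_Exp1:
  assumes "H \<in> borel_measurable borel"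
  shows "(\<integral>\<^sup>+t. H t \<partial>Exp1) = (\<integral>\<^sup>+t. exp1_density t * H t \<partial>lborel)"
  unfolding Exp1_def using assms
  by (subst nn_integral_density) (auto intro!: nn_integral_cong simp: exp1_density_def exponential_density_def indicator_def)

lemma nn_integral_U01:
  assumes "H \<in> borel_measurable borel"
  shows "(\<integral>\<^sup>+u. H u \<partial>U01) = (\<integral>\<^sup>+u. H u * indicator {0..1} u \<partial>lborel)"
  unfolding U01_def using assms
  by (subst nn_integral_uniform_measure) (auto simp: divide_ennreal_def)

lemma nn_integral_lborel_rescale_unit_interval:
  fixes F :: "real \<Rightarrow> ennreal"
  assumes [measurable]: "F \<in> borel_measurable borel" and "0 \<le> t"
  shows "ennreal t * (\<integral>\<^sup>+u. F (t - t * u) * indicator {0..1} u \<partial>lborel)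
       = (\<integral>\<^sup>+w. F w * indicator {0..t} w \<partial>lborel)"
proof (cases "t = 0")
  case False
  with \<open>0 \<le> t\<close> have "0 < t" by simp
  have "indicator {0..t} (t + (- t) * u) = (indicator {0..1} u :: ennreal)" for u
    using \<open>0 < t\<close> by (auto simp: indicator_def field_simps mult_le_cancel_left1 zero_le_mult_iff)
  then have "(\<integral>\<^sup>+w. F w * indicator {0..t} w \<partial>lborel)
      = ennreal \<bar>- t\<bar> * (\<integral>\<^sup>+u. F (t - t * u) * indicator {0..1} u \<partial>lborel)"
    using nn_integral_real_affine[of "\<lambda>w. F w * indicator {0..t} w" "- t" t] \<open>0 < t\<close> by simp
  then show ?thesis using \<open>0 < t\<close> by simp
qed simp

lemma nn_integral_Exp1_uniform_split:
  fixes H :: "real \<Rightarrow> real \<Rightarrow> ennreal"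
  assumes [measurable]: "case_prod H \<in> borel_measurable (borel \<Otimes>\<^sub>M borel)"
  shows "(\<integral>\<^sup>+t. ennreal t * (\<integral>\<^sup>+u. H (t - t * u) (t * u) \<partial>U01) \<partial>Exp1)
       = (\<integral>\<^sup>+w. \<integral>\<^sup>+v. H w v \<partial>Exp1 \<partial>Exp1)"
proof -
  have inner: "ennreal t * (\<integral>\<^sup>+u. H (t - t * u) (t * u) \<partial>U01)
      = (\<integral>\<^sup>+w. H w (t - w) * indicator {0..t} w \<partial>lborel)" if "0 \<le> t" for t
    using nn_integral_lborel_rescale_unit_interval[of "\<lambda>w. H w (t - w)" t] that
    by (simp add: nn_integral_U01)
  have shift: "(\<integral>\<^sup>+t. exp1_density t * (H w (t - w) * indicator {0..t} w) \<partial>lborel)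
      = (\<integral>\<^sup>+v. exp1_density (w + v) * indicator {0..w + v} w * H w v \<partial>lborel)" for w
    using nn_integral_real_affine[of "\<lambda>t. exp1_density t * (H w (t - w) * indicator {0..t} w)" 1 w]
    by (simp add: mult_ac)
  have "(\<integral>\<^sup>+t. ennreal t * (\<integral>\<^sup>+u. H (t - t * u) (t * u) \<partial>U01) \<partial>Exp1)
      = (\<integral>\<^sup>+t. exp1_density t * (\<integral>\<^sup>+w. H w (t - w) * indicator {0..t} w \<partial>lborel) \<partial>lborel)"
    by (subst nn_integral_Exp1, measurable)
       (auto intro!: nn_integral_cong simp: inner exp1_density_def indicator_def)
  also have "\<dots> = (\<integral>\<^sup>+w. \<integral>\<^sup>+t. exp1_density t * (H w (t - w) * indicator {0..t} w) \<partial>lborel \<partial>lborel)"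
    by (subst lborel_pair.Fubini') (auto intro!: nn_integral_cong simp: nn_integral_cmult)
  also have "\<dots> = (\<integral>\<^sup>+w. \<integral>\<^sup>+v. exp1_density (w + v) * indicator {0..w + v} w * H w v \<partial>lborel \<partial>lborel)"
    by (rule nn_integral_cong) (rule shift)
  also have "\<dots> = (\<integral>\<^sup>+w. exp1_density w * (\<integral>\<^sup>+v. exp1_density v * H w v \<partial>lborel) \<partial>lborel)"
    by (intro nn_integral_cong) (simp add: exp1_density_add nn_integral_cmult[symmetric] mult_ac)
  also have "\<dots> = (\<integral>\<^sup>+w. \<integral>\<^sup>+v. H w v \<partial>Exp1 \<partial>Exp1)"
    by (simp add: nn_integral_Exp1)
  finally show ?thesis .
qed

interpretation Exp1_pair: pair_sigma_finite Exp1 Exp1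
  by (intro pair_sigma_finite.intro prob_space_imp_sigma_finite prob_space_Exp1)

lemma nn_integral_Exp1_sum:
  fixes H :: "real \<Rightarrow> ennreal"
  assumes [measurable]: "H \<in> borel_measurable borel"
  shows "(\<integral>\<^sup>+s. \<integral>\<^sup>+t. H (s + t) \<partial>Exp1 \<partial>Exp1) = (\<integral>\<^sup>+t. ennreal t * H t \<partial>Exp1)"
proof -
  have "(\<integral>\<^sup>+s. \<integral>\<^sup>+t. H (s + t) \<partial>Exp1 \<partial>Exp1)
      = (\<integral>\<^sup>+t. ennreal t * (\<integral>\<^sup>+u. H ((t - t * u) + t * u) \<partial>U01) \<partial>Exp1)"
    by (rule nn_integral_Exp1_uniform_split[symmetric]) measurable
  also have "\<dots> = (\<integral>\<^sup>+t. ennreal t * H t \<partial>Exp1)"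
    using prob_space.emeasure_space_1[OF prob_space_U01] by simp
  finally show ?thesis .
qed

lemma nn_integral_Exp1_uniform_transfer:
  fixes H :: "real \<Rightarrow> real \<Rightarrow> ennreal"
  assumes [measurable]: "case_prod H \<in> borel_measurable (borel \<Otimes>\<^sub>M borel)"
  shows "(\<integral>\<^sup>+b. \<integral>\<^sup>+a. ennreal a * (\<integral>\<^sup>+u. H (a - a * u) (b + a * u) \<partial>U01) \<partial>Exp1 \<partial>Exp1)
       = (\<integral>\<^sup>+b. \<integral>\<^sup>+a. ennreal b * H a b \<partial>Exp1 \<partial>Exp1)"
proof -
  have "(\<integral>\<^sup>+b. \<integral>\<^sup>+a. ennreal a * (\<integral>\<^sup>+u. H (a - a * u) (b + a * u) \<partial>U01) \<partial>Exp1 \<partial>Exp1)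
      = (\<integral>\<^sup>+b. \<integral>\<^sup>+w. \<integral>\<^sup>+v. H w (b + v) \<partial>Exp1 \<partial>Exp1 \<partial>Exp1)"
    by (rule nn_integral_cong, rule nn_integral_Exp1_uniform_split) measurable
  also have "\<dots> = (\<integral>\<^sup>+w. \<integral>\<^sup>+b. \<integral>\<^sup>+v. H w (b + v) \<partial>Exp1 \<partial>Exp1 \<partial>Exp1)"
    by (rule Exp1_pair.Fubini') measurable
  also have "\<dots> = (\<integral>\<^sup>+w. \<integral>\<^sup>+c. ennreal c * H w c \<partial>Exp1 \<partial>Exp1)"
    by (rule nn_integral_cong, rule nn_integral_Exp1_sum) measurable
  also have "\<dots> = (\<integral>\<^sup>+b. \<integral>\<^sup>+a. ennreal b * H a b \<partial>Exp1 \<partial>Exp1)"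
    by (rule Exp1_pair.Fubini') measurable
  finally show ?thesis .
qed

lemma AE_Exp1_nonneg: "AE t in Exp1. 0 \<le> t"
  unfolding Exp1_def by (subst AE_density) (auto simp: exponential_density_def)

lemma nn_integral_Exp1_mean: "(\<integral>\<^sup>+t. ennreal t \<partial>Exp1) = 1"
  using nn_integral_Exp1_sum[of "\<lambda>_. 1"] prob_space.emeasure_space_1[OF prob_space_Exp1] by simp

lemma integrable_Exp1_id: "integrable Exp1 (\<lambda>t. t)"
  by (rule integrableI_nonneg) (simp_all add: AE_Exp1_nonneg nn_integral_Exp1_mean)

lemma measurable_PiM_fun_upd [measurable (raw)]:
  "k \<in> I \<Longrightarrow> h \<in> measurable N (PiM I M) \<Longrightarrow> v \<in> measurable N (M k) \<Longrightarrow>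
    (\<lambda>x. (h x)(k := v x)) \<in> measurable N (PiM I M)"
  by (rule measurable_fun_upd[where J = I]) auto

lemma measurable_PiM_fun_upd_slice:
  assumes "k \<in> I" "x \<in> space (PiM (I - {k}) M)"
  shows "(\<lambda>t. x(k := t)) \<in> measurable (M k) (PiM I M)"
  by (rule measurable_fun_upd[where J = "I - {k}"]) (use assms in auto)

lemma measurable_PiM_fun_upd2_slice:
  assumes "i \<in> I" "j \<in> I" "i \<noteq> j" "x \<in> space (PiM (I - {i} - {j}) M)"
  shows "(\<lambda>(a, b). x(i := a, j := b)) \<in> measurable (M i \<Otimes>\<^sub>M M j) (PiM I M)"
proof -
  have "I = (I - {j}) \<union> {j}"
    using assms by auto
  moreover have "(\<lambda>p. x(i := fst p)) \<in> measurable (M i \<Otimes>\<^sub>M M j) (PiM (I - {j}) M)"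
    by (rule measurable_fun_upd[where J = "I - {i} - {j}"]) (use assms in auto)
  ultimately have "(\<lambda>p. (x(i := fst p))(j := snd p)) \<in> measurable (M i \<Otimes>\<^sub>M M j) (PiM I M)"
    by (rule measurable_fun_upd[OF _ _ measurable_snd])
  then show ?thesis by (simp add: case_prod_beta')
qed

lemma (in product_sigma_finite) product_nn_integral_component:
  assumes "finite I" "k \<in> I" "F \<in> borel_measurable (PiM I M)"
  shows "integral\<^sup>N (PiM I M) F = (\<integral>\<^sup>+x. \<integral>\<^sup>+t. F (x(k := t)) \<partial>M k \<partial>PiM (I - {k}) M)"
  using product_nn_integral_insert[of "I - {k}" k F] assms by (simp add: insert_absorb)

lemma (in product_sigma_finite) product_nn_integral_two_components:
  assumes "finite I" "i \<in> I" "j \<in> I" "i \<noteq> j" and [measurable]: "F \<in> borel_measurable (PiM I M)"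
  shows "integral\<^sup>N (PiM I M) F
       = (\<integral>\<^sup>+x. \<integral>\<^sup>+b. \<integral>\<^sup>+a. F (x(j := b, i := a)) \<partial>M i \<partial>M j \<partial>PiM (I - {i} - {j}) M)"
proof -
  have "I = (I - {i}) \<union> {i}"
    using assms by auto
  then have [measurable]: "(\<lambda>p. (fst p)(i := snd p)) \<in> measurable (PiM (I - {i}) M \<Otimes>\<^sub>M M i) (PiM I M)"
    by (rule measurable_fun_upd[OF _ measurable_fst measurable_snd])
  have "(\<lambda>(x, t). F (x(i := t))) \<in> borel_measurable (PiM (I - {i}) M \<Otimes>\<^sub>M M i)"
    unfolding case_prod_beta' by measurable
  then have "(\<lambda>x. \<integral>\<^sup>+t. F (x(i := t)) \<partial>M i) \<in> borel_measurable (PiM (I - {i}) M)"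
    by (rule sigma_finite_measure.borel_measurable_nn_integral[OF sigma_finite_measures])
  then show ?thesis
    using assms
    by (subst product_nn_integral_component[of I i], simp_all)
       (subst product_nn_integral_component[of "I - {i}" j], auto)
qed

interpretation Exp1_product: product_sigma_finite "\<lambda>_ :: nat. Exp1"
  by (simp add: product_sigma_finite_def prob_space_imp_sigma_finite[OF prob_space_Exp1])

lemma nn_integral_PiM_Exp1_shrink:
  fixes G :: "(nat \<Rightarrow> real) \<Rightarrow> ennreal"
  assumes "finite I" "k \<in> I" and [measurable]: "G \<in> borel_measurable (PiM I (\<lambda>_. Exp1))"
  shows "(\<integral>\<^sup>+y. ennreal (y k) * (\<integral>\<^sup>+u. G (y(k := y k - y k * u)) \<partial>U01) \<partial>PiM I (\<lambda>_. Exp1))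
       = (\<integral>\<^sup>+y. G y \<partial>PiM I (\<lambda>_. Exp1))"
proof -
  have "(\<integral>\<^sup>+t. ennreal t * (\<integral>\<^sup>+u. G (x(k := t - t * u)) \<partial>U01) \<partial>Exp1)
      = (\<integral>\<^sup>+t. G (x(k := t)) \<partial>Exp1)"
    if "x \<in> space (PiM (I - {k}) (\<lambda>_. Exp1))" for x
  proof -
    note [measurable] = measurable_PiM_fun_upd_slice[OF \<open>k \<in> I\<close> that]
    have "(\<integral>\<^sup>+t. ennreal t * (\<integral>\<^sup>+u. G (x(k := t - t * u)) \<partial>U01) \<partial>Exp1)
        = (\<integral>\<^sup>+w. \<integral>\<^sup>+v. G (x(k := w)) \<partial>Exp1 \<partial>Exp1)"
      by (rule nn_integral_Exp1_uniform_split[of "\<lambda>w v. G (x(k := w))"]) measurable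
    then show ?thesis
      using prob_space.emeasure_space_1[OF prob_space_Exp1] by simp
  qed
  with assms show ?thesis
    by (subst (1 2) Exp1_product.product_nn_integral_component) (auto intro: nn_integral_cong)
qed

lemma nn_integral_PiM_Exp1_grow:
  fixes G :: "(nat \<Rightarrow> real) \<Rightarrow> ennreal"
  assumes "finite I" "k \<in> I" and [measurable]: "G \<in> borel_measurable (PiM I (\<lambda>_. Exp1))"
  shows "(\<integral>\<^sup>+y. \<integral>\<^sup>+z. G (y(k := y k + z)) \<partial>Exp1 \<partial>PiM I (\<lambda>_. Exp1))
       = (\<integral>\<^sup>+y. ennreal (y k) * G y \<partial>PiM I (\<lambda>_. Exp1))"
proof -
  have "(\<integral>\<^sup>+t. \<integral>\<^sup>+z. G (x(k := t + z)) \<partial>Exp1 \<partial>Exp1)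
      = (\<integral>\<^sup>+t. ennreal t * G (x(k := t)) \<partial>Exp1)"
    if "x \<in> space (PiM (I - {k}) (\<lambda>_. Exp1))" for x
  proof -
    note [measurable] = measurable_PiM_fun_upd_slice[OF \<open>k \<in> I\<close> that]
    show ?thesis
      by (rule nn_integral_Exp1_sum[of "\<lambda>t. G (x(k := t))"]) measurable
  qed
  with assms show ?thesis
    by (subst (1 2) Exp1_product.product_nn_integral_component) (auto intro: nn_integral_cong)
qed

lemma nn_integral_PiM_Exp1_transfer:
  fixes G :: "(nat \<Rightarrow> real) \<Rightarrow> ennreal"
  assumes "finite I" "i \<in> I" "Suc i \<in> I" and [measurable]: "G \<in> borel_measurable (PiM I (\<lambda>_. Exp1))"
  shows "(\<integral>\<^sup>+y. ennreal (y i) * (\<integral>\<^sup>+u. G (y(i := y i - y i * u, Suc i := y (Suc i) + y i * u)) \<partial>U01)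
           \<partial>PiM I (\<lambda>_. Exp1))
       = (\<integral>\<^sup>+y. ennreal (y (Suc i)) * G y \<partial>PiM I (\<lambda>_. Exp1))"
proof -
  have "(\<integral>\<^sup>+b. \<integral>\<^sup>+a. ennreal a * (\<integral>\<^sup>+u. G (x(i := a - a * u, Suc i := b + a * u)) \<partial>U01) \<partial>Exp1 \<partial>Exp1)
      = (\<integral>\<^sup>+b. \<integral>\<^sup>+a. ennreal b * G (x(i := a, Suc i := b)) \<partial>Exp1 \<partial>Exp1)"
    if "x \<in> space (PiM (I - {i} - {Suc i}) (\<lambda>_. Exp1))" for x
  proof -
    note [measurable] = measurable_PiM_fun_upd2_slice[OF \<open>i \<in> I\<close> \<open>Suc i \<in> I\<close> _ that]
    show ?thesis
      by (rule nn_integral_Exp1_uniform_transfer[of "\<lambda>a b. G (x(i := a, Suc i := b))"]) measurable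
  qed
  with assms show ?thesis
    by (subst (1 2) Exp1_product.product_nn_integral_two_components[of _ i "Suc i"])
       (auto intro: nn_integral_cong simp: fun_upd_twist[of "Suc i" i])
qed

lemma has_bochner_integral_jump_term:
  fixes g r h :: "'a \<Rightarrow> real" and J :: "'a \<Rightarrow> 'b \<Rightarrow> 'a"
  assumes "prob_space N"
    and [measurable]: "g \<in> borel_measurable M" "r \<in> borel_measurable M"
      "(\<lambda>(y, u). J y u) \<in> measurable (M \<Otimes>\<^sub>M N) M"
    and g: "\<And>y. 0 \<le> g y" "\<And>y. g y \<le> K"
    and r: "AE y in M. 0 \<le> r y" and rg: "integrable M (\<lambda>y. r y * g y)"
    and h: "integrable M h" "AE y in M. 0 \<le> h y"
    and balance: "(\<integral>\<^sup>+y. ennreal (r y) * (\<integral>\<^sup>+u. ennreal (g (J y u)) \<partial>N) \<partial>M)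
      = (\<integral>\<^sup>+y. ennreal (h y) \<partial>M)"
  shows "has_bochner_integral M (\<lambda>y. r y * (\<integral>u. g (J y u) - g y \<partial>N))
           (integral\<^sup>L M h - integral\<^sup>L M (\<lambda>y. r y * g y))"
proof -
  interpret N: prob_space N by fact
  define A where "A y = (\<integral>u. g (J y u) \<partial>N)" for y
  have gJ: "(\<lambda>(y, u). g (J y u)) \<in> borel_measurable (M \<Otimes>\<^sub>M N)"
    by measurable
  then have [measurable]: "A \<in> borel_measurable M"
    unfolding A_def by (rule N.borel_measurable_lebesgue_integral)
  have slice: "(\<lambda>u. g (J y u)) \<in> borel_measurable N" if "y \<in> space M" for y
    using measurable_compose[OF measurable_Pair1' gJ, OF that] by simp
  have integrable_slice: "integrable N (\<lambda>u. g (J y u))" if "y \<in> space M" for y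
    by (rule N.integrable_const_bound[where B = K]) (use g slice[OF that] in auto)
  have "AE y in M. ennreal (r y * A y) = ennreal (r y) * (\<integral>\<^sup>+u. ennreal (g (J y u)) \<partial>N)"
    using r
  proof (rule AE_mp, intro AE_I2 impI)
    fix y assume "y \<in> space M" "0 \<le> r y"
    moreover have "ennreal (A y) = (\<integral>\<^sup>+u. ennreal (g (J y u)) \<partial>N)"
      unfolding A_def using integrable_slice[OF \<open>y \<in> space M\<close>] g
      by (intro nn_integral_eq_integral[symmetric]) auto
    moreover have "0 \<le> A y"
      unfolding A_def using g by (simp add: integral_nonneg_AE)
    ultimately show "ennreal (r y * A y) = ennreal (r y) * (\<integral>\<^sup>+u. ennreal (g (J y u)) \<partial>N)"
      by (simp add: ennreal_mult)
  qed
  then have "(\<integral>\<^sup>+y. ennreal (r y * A y) \<partial>M) = ennreal (integral\<^sup>L M h)"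
    using balance h by (simp add: nn_integral_cong_AE nn_integral_eq_integral)
  then have "has_bochner_integral M (\<lambda>y. r y * A y) (integral\<^sup>L M h)"
    using r h g unfolding A_def
    by (intro has_bochner_integral_nn_integral) (auto intro!: integral_nonneg_AE)
  then have "has_bochner_integral M (\<lambda>y. r y * A y - r y * g y)
      (integral\<^sup>L M h - integral\<^sup>L M (\<lambda>y. r y * g y))"
    using rg by (intro has_bochner_integral_diff has_bochner_integral_integrable)
  moreover have "r y * (\<integral>u. g (J y u) - g y \<partial>N) = r y * A y - r y * g y" if "y \<in> space M" for y
    using integrable_slice[OF that]
    by (simp add: A_def N.prob_space right_diff_distrib)
  ultimately show ?thesis
    by (simp cong: has_bochner_integral_cong)
qed

lemma AE_PiM_Exp1_nonneg: "k \<in> I \<Longrightarrow> AE y in PiM I (\<lambda>_. Exp1). 0 \<le> y k"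
  by (rule AE_PiM_component[OF prob_space_Exp1 _ AE_Exp1_nonneg])

lemma gap_gen_add_const: "gap_gen n theta (\<lambda>y. f y + c) = gap_gen n theta f"
  by (simp add: gap_gen_def fun_eq_iff)

context
  fixes I :: "nat set" and g :: "(nat \<Rightarrow> real) \<Rightarrow> real" and K :: real
  assumes finite_I: "finite I"
    and measurable_g [measurable]: "g \<in> borel_measurable (PiM I (\<lambda>_. Exp1))"
    and g_nonneg: "\<And>y. 0 \<le> g y" and g_le: "\<And>y. g y \<le> K"
begin

lemma borel_measurable_ennreal_g: "(\<lambda>y. ennreal (g y)) \<in> borel_measurable (PiM I (\<lambda>_. Exp1))"
  by measurable

lemma integrable_PiM_Exp1_bounded: "integrable (PiM I (\<lambda>_. Exp1)) g"
proof -
  interpret prob_space "PiM I (\<lambda>_. Exp1)"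
    by (intro prob_space_PiM prob_space_Exp1)
  show ?thesis
    by (rule integrable_const_bound[where B = K]) (simp_all add: g_nonneg g_le)
qed

lemma integrable_PiM_Exp1_component_mult:
  assumes "k \<in> I"
  shows "integrable (PiM I (\<lambda>_. Exp1)) (\<lambda>y. y k * g y)"
proof (rule Bochner_Integration.integrable_bound)
  have "integrable (distr (PiM I (\<lambda>_. Exp1)) Exp1 (\<lambda>y. y k)) (\<lambda>t. t)"
    using integrable_Exp1_id distr_PiM_component[of I "\<lambda>_. Exp1" k] prob_space_Exp1 assms
    by simp
  then show "integrable (PiM I (\<lambda>_. Exp1)) (\<lambda>y. K * y k)"
    using assms by (subst (asm) integrable_distr_eq) auto
  show "AE y in PiM I (\<lambda>_. Exp1). norm (y k * g y) \<le> norm (K * y k)"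
  proof (intro AE_I2)
    fix y
    have "\<bar>g y\<bar> \<le> \<bar>K\<bar>"
      using g_nonneg[of y] g_le[of y] by linarith
    from mult_right_mono[OF this abs_ge_zero[of "y k"]]
    show "norm (y k * g y) \<le> norm (K * y k)"
      by (simp add: abs_mult mult.commute)
  qed
qed (use assms in measurable)

lemma AE_PiM_Exp1_component_mult_nonneg:
  assumes "k \<in> I"
  shows "AE y in PiM I (\<lambda>_. Exp1). 0 \<le> y k * g y"
  using AE_PiM_Exp1_nonneg[OF assms] by eventually_elim (simp add: g_nonneg)

lemma ennreal_component_mult: "ennreal (y k * g y) = ennreal (y k) * ennreal (g y)"
  by (simp add: ennreal_mult'' g_nonneg)

lemma has_bochner_integral_PiM_Exp1_shrink_term:
  assumes "k \<in> I"
  shows "has_bochner_integral (PiM I (\<lambda>_. Exp1))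
      (\<lambda>y. y k * (\<integral>u. g (y(k := y k - y k * u)) - g y \<partial>U01))
      (integral\<^sup>L (PiM I (\<lambda>_. Exp1)) g - (\<integral>y. y k * g y \<partial>PiM I (\<lambda>_. Exp1)))"
  by (rule has_bochner_integral_jump_term[OF prob_space_U01 measurable_g _ _ g_nonneg g_le
        AE_PiM_Exp1_nonneg[OF assms] integrable_PiM_Exp1_component_mult[OF assms]
        integrable_PiM_Exp1_bounded AE_I2[OF g_nonneg] nn_integral_PiM_Exp1_shrink[OF finite_I assms borel_measurable_ennreal_g]])
     (use assms in measurable)

lemma has_bochner_integral_PiM_Exp1_transfer_term:
  assumes "i \<in> I" "Suc i \<in> I"
  shows "has_bochner_integral (PiM I (\<lambda>_. Exp1))
      (\<lambda>y. y i * (\<integral>u. g (y(i := y i - y i * u, Suc i := y (Suc i) + y i * u)) - g y \<partial>U01))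
      ((\<integral>y. y (Suc i) * g y \<partial>PiM I (\<lambda>_. Exp1)) - (\<integral>y. y i * g y \<partial>PiM I (\<lambda>_. Exp1)))"
proof -
  have balance: "(\<integral>\<^sup>+y. ennreal (y i) *
        (\<integral>\<^sup>+u. ennreal (g (y(i := y i - y i * u, Suc i := y (Suc i) + y i * u))) \<partial>U01)
        \<partial>PiM I (\<lambda>_. Exp1))
      = (\<integral>\<^sup>+y. ennreal (y (Suc i) * g y) \<partial>PiM I (\<lambda>_. Exp1))"
    unfolding ennreal_component_mult
    by (rule nn_integral_PiM_Exp1_transfer[OF finite_I assms borel_measurable_ennreal_g])
  show ?thesis
    by (rule has_bochner_integral_jump_term[OF prob_space_U01 measurable_g _ _ g_nonneg g_le
          AE_PiM_Exp1_nonneg[OF assms(1)] integrable_PiM_Exp1_component_mult[OF assms(1)]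
          integrable_PiM_Exp1_component_mult[OF assms(2)]
          AE_PiM_Exp1_component_mult_nonneg[OF assms(2)] balance])
       (use assms in measurable)
qed

lemma has_bochner_integral_PiM_Exp1_grow_term:
  assumes "k \<in> I"
  shows "has_bochner_integral (PiM I (\<lambda>_. Exp1))
      (\<lambda>y. \<integral>z. g (y(k := y k + z)) - g y \<partial>Exp1)
      ((\<integral>y. y k * g y \<partial>PiM I (\<lambda>_. Exp1)) - integral\<^sup>L (PiM I (\<lambda>_. Exp1)) g)"
proof -
  have balance: "(\<integral>\<^sup>+y. ennreal 1 * (\<integral>\<^sup>+z. ennreal (g (y(k := y k + z))) \<partial>Exp1) \<partial>PiM I (\<lambda>_. Exp1))
      = (\<integral>\<^sup>+y. ennreal (y k * g y) \<partial>PiM I (\<lambda>_. Exp1))"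
    unfolding ennreal_component_mult ennreal_1 mult_1
    by (rule nn_integral_PiM_Exp1_grow[OF finite_I assms borel_measurable_ennreal_g])
  have "has_bochner_integral (PiM I (\<lambda>_. Exp1)) (\<lambda>y. 1 * (\<integral>z. g (y(k := y k + z)) - g y \<partial>Exp1))
      ((\<integral>y. y k * g y \<partial>PiM I (\<lambda>_. Exp1)) - (\<integral>y. 1 * g y \<partial>PiM I (\<lambda>_. Exp1)))"
    by (rule has_bochner_integral_jump_term[OF prob_space_Exp1 measurable_g _ _ g_nonneg g_le
          AE_I2 _ integrable_PiM_Exp1_component_mult[OF assms]
          AE_PiM_Exp1_component_mult_nonneg[OF assms] balance])
       (use assms integrable_PiM_Exp1_bounded in \<open>measurable, simp_all\<close>)
  then show ?thesis
    by simp
qed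

end

lemma has_bochner_integral_gap_gen_Exp1:
  assumes "2 \<le> n" and [measurable]: "g \<in> borel_measurable (PiM {1..n - 1} (\<lambda>_. Exp1))"
    and "\<And>y. 0 \<le> g y" "\<And>y. g y \<le> K"
  shows "has_bochner_integral (PiM {1..n - 1} (\<lambda>_. Exp1)) (gap_gen n Exp1 g) 0"
proof -
  let ?I = "{1..n - 1}"
  let ?M = "PiM ?I (\<lambda>_. Exp1)"
  define E where "E k = (\<integral>y. y k * g y \<partial>?M)" for k
  have "finite ?I" "n - 1 \<in> ?I" "1 \<in> ?I" "\<And>i. i \<in> {1..n - 2} \<Longrightarrow> i \<in> ?I \<and> Suc i \<in> ?I"
    using assms(1) by auto
  then have "has_bochner_integral ?M (gap_gen n Exp1 g)
      ((integral\<^sup>L ?M g - E (n - 1)) + (\<Sum>i\<in>{1..n - 2}. E (Suc i) - E i) + (E 1 - integral\<^sup>L ?M g))"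
    unfolding gap_gen_def E_def using assms
    by (intro has_bochner_integral_add has_bochner_integral_sum has_bochner_integral_PiM_Exp1_shrink_term
        has_bochner_integral_PiM_Exp1_transfer_term has_bochner_integral_PiM_Exp1_grow_term) auto
  moreover have "(\<Sum>i\<in>{1..n - 2}. E (Suc i) - E i) = E (n - 1) - E 1"
    using sum_Suc_diff[of 1 "n - 2" E] assms(1) by (simp add: Suc_diff_Suc numeral_2_eq_2)
  ultimately show ?thesis
    by simp
qed

theorem theorem3p3:
  fixes n :: nat
  assumes "n \<ge> 2"
  shows "gap_stationary n Exp1 (PiM {1..n - 1} (\<lambda>_. Exp1))"
proof -
  let ?M = "PiM {1..n - 1} (\<lambda>_. Exp1)"
  have sets: "sets ?M = sets (gap_space n)"
    unfolding gap_space_def by (rule sets_PiM_cong) auto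
  have "has_bochner_integral ?M (gap_gen n Exp1 f) 0"
    if "f \<in> borel_measurable (gap_space n)" "\<And>y. \<bar>f y\<bar> \<le> B" for f B
  proof -
    have [measurable]: "f \<in> borel_measurable ?M"
      using that(1) by (subst measurable_cong_sets[OF sets refl])
    have bounds: "0 \<le> f y + B" "f y + B \<le> 2 * B" for y
      using that(2)[of y] by auto
    have "has_bochner_integral ?M (gap_gen n Exp1 (\<lambda>y. f y + B)) 0"
      by (rule has_bochner_integral_gap_gen_Exp1[OF assms _ bounds]) measurable
    then show ?thesis
      by (simp add: gap_gen_add_const)
  qed
  moreover have "AE y in ?M. \<forall>i\<in>{1..n - 1}. 0 \<le> y i"
    by (intro AE_finite_allI AE_PiM_Exp1_nonneg) auto
  moreover have "prob_space ?M"
    by (intro prob_space_PiM prob_space_Exp1)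
  ultimately show ?thesis
    unfolding gap_stationary_def using sets by (auto simp: has_bochner_integral_iff)
qed

end
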